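(* Let $p$ be a prime, $G$ and $H$ finite $p$-groups, and for $\Gamma\in\{G,H\}$ let $N_\Gamma$ be a subgroup of $\Gamma$ containing $\Gamma'$. Let $k$ be a field of characteristic $p$ and $\phi:kG\to kH$ a ring isomorphism with $\phi(I(N_G)kG)=I(N_H)kH$. Then for every positive integer $t$, $\phi\big(I(\Omega_t(G:N_G))kG\big)=I(\Omega_t(H:N_H))kH$.
   Context: For a subgroup $N$ of $\Gamma$, $I(N)$ is the augmentation ideal of $kN$ and $I(N)k\Gamma$ the relative augmentation ideal. For a normal subgroup $N$ of $\Gamma$, $\Omega_t(\Gamma:N)=\langle g\in\Gamma: g^{p^t}\in N\rangle$, i.e.\ the subgroup containing $N$ with $\Omega_t(\Gamma:N)/N=\Omega_t(\Gamma/N)$. *)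

theory Defs
  imports "HOL-Algebra.Algebra"
begin

definition galg_carrier :: "('g, 'b) monoid_scheme \<Rightarrow> ('g \<Rightarrow> 'k::field) set" where
  "galg_carrier G = {f. \<forall>x. x \<notin> carrier G \<longrightarrow> f x = 0}"

definition galg_mult :: "('g, 'b) monoid_scheme \<Rightarrow> ('g \<Rightarrow> 'k::field) \<Rightarrow> ('g \<Rightarrow> 'k) \<Rightarrow> ('g \<Rightarrow> 'k)" where
  "galg_mult G f h = (\<lambda>x. if x \<in> carrier G
      then (\<Sum>y\<in>carrier G. f y * h (inv\<^bsub>G\<^esub> y \<otimes>\<^bsub>G\<^esub> x)) else 0)"

definition group_alg :: "('g, 'b) monoid_scheme \<Rightarrow> ('g \<Rightarrow> 'k::field) ring" where
  "group_alg G = \<lparr> carrier = galg_carrier G,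
                   monoid.mult = galg_mult G,
                   one = (\<lambda>x. if x = \<one>\<^bsub>G\<^esub> then 1 else 0),
                   ring.zero = (\<lambda>x. 0),
                   ring.add = (\<lambda>f h x. f x + h x) \<rparr>"

definition aug_ideal :: "('g, 'b) monoid_scheme \<Rightarrow> 'g set \<Rightarrow> ('g \<Rightarrow> 'k::field) set" where
  "aug_ideal G N = {f. (\<forall>x. x \<notin> N \<longrightarrow> f x = 0) \<and> (\<Sum>x\<in>N. f x) = 0}"

definition rel_aug_ideal :: "('g, 'b) monoid_scheme \<Rightarrow> 'g set \<Rightarrow> ('g \<Rightarrow> 'k::field) set" where
  "rel_aug_ideal G N = {s. \<exists>(n::nat) a b.
      (\<forall>i<n. a i \<in> aug_ideal G N \<and> b i \<in> galg_carrier G) \<and>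
      s = (\<lambda>x. \<Sum>i<n. galg_mult G (a i) (b i) x)}"

definition Omega_rel :: "('g, 'b) monoid_scheme \<Rightarrow> nat \<Rightarrow> nat \<Rightarrow> 'g set \<Rightarrow> 'g set" where
  "Omega_rel G p t N = generate G {g \<in> carrier G. g [^]\<^bsub>G\<^esub> (p ^ t) \<in> N}"

definition p_group :: "nat \<Rightarrow> ('g, 'b) monoid_scheme \<Rightarrow> bool" where
  "p_group p G \<longleftrightarrow> group G \<and> finite (carrier G) \<and> (\<exists>n. card (carrier G) = p ^ n)"

end

theory Submission
  imports Defs "HOL-Computational_Algebra.Primes"
begin

text \<open>
  Put \<open>q = p\<^sup>t\<close>. As \<open>N\<close> contains \<open>\<Gamma>'\<close>, the quotient \<open>Q = \<Gamma>/N\<close> is abelian, and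
  \<open>I(N)k\<Gamma>\<close> is the kernel of the projection \<open>\<pi> : k\<Gamma> \<rightarrow> kQ\<close>. In the commutative algebra
  \<open>kQ\<close> of characteristic \<open>p\<close> the Frobenius gives
  \<open>(\<Sum> a\<^sub>E E)\<^sup>q = \<Sum>\<^sub>D (\<Sum>{a\<^sub>E | E\<^sup>q = D})\<^sup>q D\<close>, so \<open>\<pi>(f)\<^sup>q = 0\<close> iff the coefficients of \<open>f\<close>
  sum to zero over every fibre of \<open>g \<mapsto> (gN)\<^sup>q\<close>. These fibres are the cosets of the kernel
  \<open>\<Omega>\<^sub>t(\<Gamma>:N)\<close> of that homomorphism, hence \<open>f\<^sup>q \<in> I(N)k\<Gamma>\<close> iff \<open>f \<in> I(\<Omega>\<^sub>t(\<Gamma>:N))k\<Gamma>\<close>.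
  This describes \<open>I(\<Omega>\<^sub>t(\<Gamma>:N))k\<Gamma>\<close> ring-theoretically in terms of \<open>I(N)k\<Gamma>\<close>, so it is
  carried over by any ring isomorphism that maps \<open>I(N\<^sub>G)kG\<close> onto \<open>I(N\<^sub>H)kH\<close>.
\<close>

section \<open>Cosets and quotients\<close>

lemma (in group) sum_rcos:
  assumes "N \<subseteq> carrier G" "g \<in> carrier G"
  shows "(\<Sum>x\<in>N #> g. f x) = (\<Sum>h\<in>N. f (h \<otimes> g))"
proof -
  have "inj_on (\<lambda>h. h \<otimes> g) N"
    using assms by (rule inj_on_g)
  moreover have "N #> g = (\<lambda>h. h \<otimes> g) ` N"
    by (auto simp: r_coset_def)
  ultimately show ?thesis
    by (simp add: sum.reindex)
qed

lemma (in group) sum_lcos: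
  assumes "A \<subseteq> carrier G" "y \<in> carrier G"
  shows "(\<Sum>x\<in>A. f (y \<otimes> x)) = (\<Sum>z\<in>l_coset G y A. f z)"
proof -
  have "inj_on (\<lambda>x. y \<otimes> x) A"
    using inj_on_subset[OF inj_on_cmult] assms by blast
  moreover have "l_coset G y A = (\<lambda>x. y \<otimes> x) ` A"
    by (auto simp: l_coset_def)
  ultimately show ?thesis
    by (simp add: sum.reindex)
qed

lemma (in group) lcos_rcos_subgroup:
  assumes "subgroup N G" "y \<in> N" "g \<in> carrier G"
  shows "l_coset G y (N #> g) = N #> g"
  using assms by (simp add: coset_assoc coset_join3 subgroup.subset subgroup.mem_carrier)

lemma (in normal) lcos_rcos:
  assumes "y \<in> carrier G" "g \<in> carrier G"
  shows "l_coset G y (H #> g) = H #> (y \<otimes> g)"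
  using assms by (simp add: coset_assoc coset_eq lcos_m_assoc subset)

lemma (in group) rcosets_mem_iff:
  assumes "subgroup N G" "C \<in> rcosets N" "x \<in> carrier G"
  shows "x \<in> C \<longleftrightarrow> C = N #> x"
  using assms repr_independence rcos_self by (auto simp: RCOSETS_def)

lemma (in group) rcosets_some_repr:
  assumes N: "subgroup N G" and C: "C \<in> rcosets N"
  shows "(SOME t. t \<in> C) \<in> carrier G" "C = N #> (SOME t. t \<in> C)"
proof -
  obtain g where g: "g \<in> carrier G" "C = N #> g"
    using C by (auto simp: RCOSETS_def)
  then have "(SOME t. t \<in> C) \<in> C"
    using rcos_self[OF g(1) N] by (metis someI)
  then show "(SOME t. t \<in> C) \<in> carrier G" "C = N #> (SOME t. t \<in> C)"
    using g repr_independence[OF _ g(1) N] r_coset_subset_G[OF subgroup.subset[OF N] g(1)] by auto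
qed

lemma (in normal) FactGroup_inv_mult:
  assumes "y \<in> carrier G" "g \<in> carrier G"
  shows "inv\<^bsub>G Mod H\<^esub> (H #> y) \<otimes>\<^bsub>G Mod H\<^esub> (H #> g) = H #> (inv y \<otimes> g)"
proof -
  have "H #> y \<in> carrier (G Mod H)"
    using assms by (simp add: FactGroup_def rcosetsI subset)
  then show ?thesis
    using assms by (simp add: inv_FactGroup rcos_inv rcos_sum)
qed

lemma (in group_hom) kernel_rcos_eq:
  assumes "g \<in> carrier G"
  shows "kernel G H h #> g = {x \<in> carrier G. h x = h g}"
proof -
  have "x \<in> kernel G H h #> g \<longleftrightarrow> h x = h g" if x: "x \<in> carrier G" for x
  proof -
    have "x \<in> kernel G H h #> g \<longleftrightarrow> h x \<otimes>\<^bsub>H\<^esub> inv\<^bsub>H\<^esub> h g = \<one>\<^bsub>H\<^esub>"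
      using subgroup.rcos_module[OF subgroup_kernel G.is_group assms x] assms x
      by (simp add: kernel_def)
    also have "\<dots> \<longleftrightarrow> h x = h g"
      using assms x by (metis H.inv_closed H.inv_equality H.inv_inv H.r_inv hom_closed)
    finally show ?thesis .
  qed
  moreover have "kernel G H h #> g \<subseteq> carrier G"
    using G.r_coset_subset_G[OF subgroup.subset[OF subgroup_kernel] assms] .
  ultimately show ?thesis
    by blast
qed

lemma (in group) commutator_in_derived:
  assumes "a \<in> carrier G" "b \<in> carrier G"
  shows "a \<otimes> b \<otimes> inv a \<otimes> inv b \<in> derived G (carrier G)"
  using assms unfolding derived_def by (blast intro: generate.incl)

lemma (in group) normal_if_derived_subset:
  assumes N: "subgroup N G" and derived: "derived G (carrier G) \<subseteq> N"
  shows "N \<lhd> G"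
proof (rule normal_invI[OF N])
  fix x h assume x: "x \<in> carrier G" and h: "h \<in> N"
  have h_carrier: "h \<in> carrier G"
    using N h by (rule subgroup.mem_carrier)
  have "x \<otimes> h \<otimes> inv x \<otimes> inv h \<in> N"
    using commutator_in_derived[OF x h_carrier] derived by blast
  then have "(x \<otimes> h \<otimes> inv x \<otimes> inv h) \<otimes> h \<in> N"
    using h by (rule subgroup.m_closed[OF N])
  moreover have "(x \<otimes> h \<otimes> inv x \<otimes> inv h) \<otimes> h = x \<otimes> h \<otimes> inv x"
    using x h_carrier by (simp add: m_assoc)
  ultimately show "x \<otimes> h \<otimes> inv x \<in> N"
    by simp
qed

lemma (in group) comm_group_Mod_if_derived_subset:
  assumes N: "subgroup N G" and derived: "derived G (carrier G) \<subseteq> N"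
  shows "comm_group (G Mod N)"
proof -
  interpret normal N G
    using normal_if_derived_subset[OF assms] .
  interpret Q: group "G Mod N"
    by (rule factorgroup_is_group)
  show ?thesis
  proof (rule Q.group_comm_groupI)
    fix A B assume "A \<in> carrier (G Mod N)" "B \<in> carrier (G Mod N)"
    then obtain a b where ab: "a \<in> carrier G" "b \<in> carrier G" and AB: "A = N #> a" "B = N #> b"
      by (auto simp: FactGroup_def RCOSETS_def)
    have "a \<otimes> b \<otimes> inv (b \<otimes> a) = a \<otimes> b \<otimes> inv a \<otimes> inv b"
      using ab by (simp add: inv_mult_group m_assoc)
    then have "a \<otimes> b \<otimes> inv (b \<otimes> a) \<in> N"
      using commutator_in_derived[OF ab] derived by auto
    then have "a \<otimes> b \<in> N #> (b \<otimes> a)"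
      using ab by (intro rcos_module_rev[OF is_group]) auto
    then have "N #> (b \<otimes> a) = N #> (a \<otimes> b)"
      using ab by (intro repr_independence[OF _ _ N]) auto
    then show "A \<otimes>\<^bsub>G Mod N\<^esub> B = B \<otimes>\<^bsub>G Mod N\<^esub> A"
      using AB ab by (simp add: rcos_sum)
  qed
qed

lemma (in normal) pow_rcos_hom:
  assumes "comm_group (G Mod H)"
  shows "(\<lambda>g. (H #> g) [^]\<^bsub>G Mod H\<^esub> (n::nat)) \<in> hom G (G Mod H)"
proof -
  interpret Q: comm_group "G Mod H" by fact
  have closed: "H #> g \<in> carrier (G Mod H)" if "g \<in> carrier G" for g
    using that by (simp add: FactGroup_def rcosetsI subset)
  show ?thesis
  proof (rule homI)
    fix g assume "g \<in> carrier G"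
    then show "(H #> g) [^]\<^bsub>G Mod H\<^esub> n \<in> carrier (G Mod H)"
      by (simp add: closed)
  next
    fix x y assume x: "x \<in> carrier G" and y: "y \<in> carrier G"
    have "(H #> (x \<otimes> y)) [^]\<^bsub>G Mod H\<^esub> n = ((H #> x) \<otimes>\<^bsub>G Mod H\<^esub> (H #> y)) [^]\<^bsub>G Mod H\<^esub> n"
      using x y by (simp add: rcos_sum)
    also have "\<dots> = (H #> x) [^]\<^bsub>G Mod H\<^esub> n \<otimes>\<^bsub>G Mod H\<^esub> (H #> y) [^]\<^bsub>G Mod H\<^esub> n"
      using x y by (intro Q.nat_pow_distrib closed)
    finally show "(H #> (x \<otimes> y)) [^]\<^bsub>G Mod H\<^esub> n
        = (H #> x) [^]\<^bsub>G Mod H\<^esub> n \<otimes>\<^bsub>G Mod H\<^esub> (H #> y) [^]\<^bsub>G Mod H\<^esub> n" .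
  qed
qed

lemma (in normal) kernel_pow_rcos:
  "kernel G (G Mod H) (\<lambda>g. (H #> g) [^]\<^bsub>G Mod H\<^esub> (n::nat)) = {g \<in> carrier G. g [^] n \<in> H}"
proof -
  have "(H #> g) [^]\<^bsub>G Mod H\<^esub> n = H \<longleftrightarrow> g [^] n \<in> H" if "g \<in> carrier G" for g
    using that coset_join1[OF _ _ subgroup_axioms] coset_join2[OF _ subgroup_axioms]
    by (simp add: FactGroup_pow) blast
  then show ?thesis
    unfolding kernel_def by auto
qed

lemma (in normal) subgroup_pow_mem:
  assumes "comm_group (G Mod H)"
  shows "subgroup {g \<in> carrier G. g [^] (n::nat) \<in> H} G"
proof -
  interpret Q: comm_group "G Mod H" by fact
  interpret group_hom G "G Mod H" "\<lambda>g. (H #> g) [^]\<^bsub>G Mod H\<^esub> n"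
    by unfold_locales (rule pow_rcos_hom[OF assms])
  show ?thesis
    using subgroup_kernel kernel_pow_rcos by simp
qed

lemma (in group) Omega_rel_eq:
  assumes "subgroup {g \<in> carrier G. g [^] (p ^ t) \<in> N} G"
  shows "Omega_rel G p t N = {g \<in> carrier G. g [^] (p ^ t) \<in> N}"
  unfolding Omega_rel_def
proof (rule equalityI)
  show "generate G {g \<in> carrier G. g [^] (p ^ t) \<in> N} \<subseteq> {g \<in> carrier G. g [^] (p ^ t) \<in> N}"
    by (rule generate_subgroup_incl[OF subset_refl assms])
  show "{g \<in> carrier G. g [^] (p ^ t) \<in> N} \<subseteq> generate G {g \<in> carrier G. g [^] (p ^ t) \<in> N}"
    by (rule subsetI) (rule generate.incl)
qed

locale finite_group = group +
  assumes finite_carrier: "finite (carrier G)"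

locale finite_comm_group = finite_group G + comm_group G for G (structure)

lemma (in finite_group) finite_rcosets:
  assumes "subgroup N G"
  shows "finite (rcosets N)"
  using finite_UnionD rcosets_part_G[OF assms] finite_carrier by metis

lemma (in finite_group) sum_rcosets:
  assumes "subgroup N G"
  shows "(\<Sum>x\<in>carrier G. f x) = (\<Sum>C\<in>rcosets N. \<Sum>x\<in>C. f x)"
proof -
  have "\<forall>C\<in>rcosets N. finite C"
    using rcosets_part_G[OF assms] finite_carrier by (metis Sup_upper finite_subset)
  moreover have "\<forall>C\<in>rcosets N. \<forall>D\<in>rcosets N. C \<noteq> D \<longrightarrow> C \<inter> D = {}"
    using rcos_disjoint[OF assms] by (auto simp: pairwise_def disjnt_def)
  ultimately show ?thesis
    using sum.Union_disjoint[of "rcosets N" f] rcosets_part_G[OF assms] by simp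
qed

lemma (in finite_group) finite_comm_group_Mod:
  assumes "N \<lhd> G" "comm_group (G Mod N)"
  shows "finite_comm_group (G Mod N)"
proof -
  interpret Q: comm_group "G Mod N" by fact
  show ?thesis
    using finite_carrier by unfold_locales (simp add: carrier_FactGroup)
qed

section \<open>The group algebra\<close>

lemma group_alg_simps:
  "carrier (group_alg G) = galg_carrier G"
  "monoid.mult (group_alg G) = galg_mult G"
  "one (group_alg G) = (\<lambda>x. if x = \<one>\<^bsub>G\<^esub> then 1 else 0)"
  by (simp_all add: group_alg_def)

lemma galg_mult_closed: "galg_mult G f h \<in> galg_carrier G"
  by (simp add: galg_mult_def galg_carrier_def)

lemma (in monoid) galg_one_closed: "(\<lambda>x. if x = \<one> then (1::'k::field) else 0) \<in> galg_carrier G"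
  by (auto simp: galg_carrier_def)

lemma (in group) galg_mult_assoc:
  "galg_mult G (galg_mult G f g) h = galg_mult G f (galg_mult G g h)"
proof
  fix x
  show "galg_mult G (galg_mult G f g) h x = galg_mult G f (galg_mult G g h) x"
  proof (cases "x \<in> carrier G")
    case False
    then show ?thesis by (simp add: galg_mult_def)
  next
    case x: True
    have shift: "(\<Sum>y\<in>carrier G. g (inv z \<otimes> y) * h (inv y \<otimes> x))
        = (\<Sum>w\<in>carrier G. g w * h (inv w \<otimes> (inv z \<otimes> x)))" if z: "z \<in> carrier G" for z
    proof -
      have cancel: "inv z \<otimes> (z \<otimes> a) = a" "z \<otimes> (inv z \<otimes> a) = a" if "a \<in> carrier G" for a
        using z that by (simp_all add: m_assoc[symmetric])
      show ?thesis
        by (rule sum.reindex_bij_witness[of _ "\<lambda>w. z \<otimes> w" "\<lambda>y. inv z \<otimes> y"])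
           (auto simp: z x m_assoc inv_mult_group cancel)
    qed
    have "galg_mult G (galg_mult G f g) h x
        = (\<Sum>y\<in>carrier G. (\<Sum>z\<in>carrier G. f z * g (inv z \<otimes> y)) * h (inv y \<otimes> x))"
      using x by (simp add: galg_mult_def)
    also have "\<dots> = (\<Sum>z\<in>carrier G. f z * (\<Sum>y\<in>carrier G. g (inv z \<otimes> y) * h (inv y \<otimes> x)))"
      by (simp add: sum_distrib_left sum_distrib_right mult.assoc) (rule sum.swap)
    also have "\<dots> = galg_mult G f (galg_mult G g h) x"
      using x by (simp add: galg_mult_def shift)
    finally show ?thesis .
  qed
qed

lemma (in finite_group) galg_mult_single_left:
  assumes "a \<in> carrier G"
  shows "galg_mult G (\<lambda>x. if x = a then c else 0) f
       = (\<lambda>x. if x \<in> carrier G then c * f (inv a \<otimes> x) else 0)"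
proof
  fix x
  have "(if y = a then c else 0) * f (inv y \<otimes> x) = (if y = a then c * f (inv a \<otimes> x) else 0)" for y
    by simp
  then show "galg_mult G (\<lambda>x. if x = a then c else 0) f x
      = (if x \<in> carrier G then c * f (inv a \<otimes> x) else 0)"
    using assms finite_carrier by (simp add: galg_mult_def)
qed

lemma (in finite_group) galg_mult_single_right:
  assumes "a \<in> carrier G"
  shows "galg_mult G f (\<lambda>x. if x = a then c else 0)
       = (\<lambda>x. if x \<in> carrier G then f (x \<otimes> inv a) * c else 0)"
proof
  fix x
  have "inv y \<otimes> x = a \<longleftrightarrow> y = x \<otimes> inv a" if "x \<in> carrier G" "y \<in> carrier G" for y
    using that assms by (metis inv_solve_left' inv_solve_right)
  then have "x \<in> carrier G \<Longrightarrow> (\<Sum>y\<in>carrier G. f y * (if inv y \<otimes> x = a then c else 0))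
      = (\<Sum>y\<in>carrier G. if y = x \<otimes> inv a then f (x \<otimes> inv a) * c else 0)"
    by (intro sum.cong) auto
  then show "galg_mult G f (\<lambda>x. if x = a then c else 0) x
      = (if x \<in> carrier G then f (x \<otimes> inv a) * c else 0)"
    using assms finite_carrier by (simp add: galg_mult_def)
qed

lemma (in finite_group) galg_one_mult:
  assumes "f \<in> galg_carrier G"
  shows "galg_mult G (\<lambda>x. if x = \<one> then 1 else 0) f = f"
  using assms by (auto simp: galg_mult_single_left galg_carrier_def)

lemma (in finite_group) galg_mult_one:
  assumes "f \<in> galg_carrier G"
  shows "galg_mult G f (\<lambda>x. if x = \<one> then 1 else 0) = f"
  using assms by (auto simp: galg_mult_single_right galg_carrier_def)

lemma (in finite_group) monoid_group_alg: "monoid (group_alg G)"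
  by (rule monoidI)
     (auto simp: group_alg_simps galg_mult_closed galg_one_closed galg_mult_assoc
       galg_one_mult galg_mult_one)

lemma (in comm_group) galg_mult_comm: "galg_mult G f g = galg_mult G g f"
proof
  fix x
  show "galg_mult G f g x = galg_mult G g f x"
  proof (cases "x \<in> carrier G")
    case False
    then show ?thesis by (simp add: galg_mult_def)
  next
    case x: True
    have cancel: "inv (inv y \<otimes> x) \<otimes> x = y" if "y \<in> carrier G" for y
      using x that by (simp add: inv_mult_group m_assoc m_comm[of y x] m_assoc[symmetric, of "inv x" x])
    have "(\<Sum>y\<in>carrier G. f y * g (inv y \<otimes> x)) = (\<Sum>w\<in>carrier G. g w * f (inv w \<otimes> x))"
      by (rule sum.reindex_bij_witness[of _ "\<lambda>w. inv w \<otimes> x" "\<lambda>y. inv y \<otimes> x"])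
         (auto simp: x cancel mult.commute)
    then show ?thesis
      using x by (simp add: galg_mult_def)
  qed
qed

lemma comm_monoid_group_alg:
  assumes "finite_comm_group G"
  shows "comm_monoid (group_alg G)"
proof -
  interpret finite_comm_group G by fact
  show ?thesis
    by (rule monoid.monoid_comm_monoidI[OF monoid_group_alg])
       (simp add: group_alg_simps galg_mult_comm)
qed

lemma (in finite_group) galg_pow_closed: "f [^]\<^bsub>group_alg G\<^esub> (n::nat) \<in> galg_carrier G"
  using monoid.nat_pow_closed[OF monoid_group_alg] galg_mult_closed
  by (cases n) (simp_all add: group_alg_simps galg_one_closed)

lemma galg_mult_sum_left:
  "galg_mult G (\<lambda>x. \<Sum>i\<in>S. F i x) h = (\<lambda>x. \<Sum>i\<in>S. galg_mult G (F i) h x)"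
  by (rule ext) (auto simp: galg_mult_def sum_distrib_right intro: sum.swap)

lemma galg_mult_scale_left:
  "galg_mult G (\<lambda>x. c * f x) h = (\<lambda>x. c * galg_mult G f h x)"
  by (rule ext) (auto simp: galg_mult_def sum_distrib_left mult.assoc)

lemma galg_mult_add_right:
  "galg_mult G f (\<lambda>x. g x + h x) = (\<lambda>x. galg_mult G f g x + galg_mult G f h x)"
  by (rule ext) (auto simp: galg_mult_def distrib_left sum.distrib)

lemma (in finite_group) galg_mult_single:
  assumes "a \<in> carrier G" "b \<in> carrier G"
  shows "galg_mult G (\<lambda>x. if x = a then c else 0) (\<lambda>x. if x = b then d else 0)
       = (\<lambda>x. if x = a \<otimes> b then c * d else 0)"
proof -
  have "x \<otimes> inv b = a \<longleftrightarrow> x = a \<otimes> b" if "x \<in> carrier G" for x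
    using assms that by (metis inv_solve_right)
  then show ?thesis
    using assms by (auto simp: galg_mult_single_right)
qed

lemma (in finite_group) galg_single_pow:
  assumes "a \<in> carrier G"
  shows "(\<lambda>x. if x = a then c else 0) [^]\<^bsub>group_alg G\<^esub> n
       = (\<lambda>x. if x = a [^] n then c ^ n else (0::'k::field))"
proof (induction n)
  case 0
  then show ?case by (simp add: group_alg_simps fun_eq_iff)
next
  case (Suc n)
  have "galg_mult G (\<lambda>x. if x = a [^] n then c ^ n else 0) (\<lambda>x. if x = a then c else 0)
      = (\<lambda>x. if x = a [^] Suc n then c ^ Suc n else 0)"
    using galg_mult_single[OF nat_pow_closed[OF assms, of n] assms, where c = "c ^ n" and d = c]
    by (simp add: mult.commute cong: if_cong)
  then show ?case
    using Suc.IH by (simp add: group_alg_simps)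
qed

section \<open>Frobenius in commutative group algebras\<close>

lemma sum_binomial_pascal:
  fixes A :: "nat \<Rightarrow> nat \<Rightarrow> 'a::comm_semiring_1"
  shows "(\<Sum>k\<le>n. of_nat (n choose k) * (A (Suc k) (n - k) + A k (Suc n - k)))
       = (\<Sum>k\<le>Suc n. of_nat (Suc n choose k) * A k (Suc n - k))"
proof -
  have "(\<Sum>k\<le>n. of_nat (n choose k) * A k (Suc n - k))
      = (\<Sum>k\<le>Suc n. of_nat (n choose k) * A k (Suc n - k))"
    by (simp add: binomial_eq_0)
  also have "\<dots> = A 0 (Suc n) + (\<Sum>k\<le>n. of_nat (n choose Suc k) * A (Suc k) (n - k))"
    by (simp only: sum.atMost_Suc_shift) simp
  finally have "(\<Sum>k\<le>n. of_nat (n choose k) * A k (Suc n - k))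
      = A 0 (Suc n) + (\<Sum>k\<le>n. of_nat (n choose Suc k) * A (Suc k) (n - k))" .
  then show ?thesis
    by (simp only: sum.atMost_Suc_shift) (simp add: distrib_left distrib_right sum.distrib add_ac)
qed

lemma (in finite_comm_group) galg_binomial:
  fixes U V :: "'a \<Rightarrow> 'k::field"
  assumes U: "U \<in> galg_carrier G" and V: "V \<in> galg_carrier G"
  shows "(\<lambda>x. U x + V x) [^]\<^bsub>group_alg G\<^esub> n
     = (\<lambda>x. \<Sum>k\<le>n. of_nat (n choose k)
                   * galg_mult G (U [^]\<^bsub>group_alg G\<^esub> k) (V [^]\<^bsub>group_alg G\<^esub> (n - k)) x)"
proof (induction n)
  case 0
  have "(\<lambda>x. U x + V x) \<in> galg_carrier G"
    using U V by (simp add: galg_carrier_def)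
  then show ?case
    by (simp add: group_alg_simps galg_one_mult galg_one_closed)
next
  case (Suc n)
  interpret R: comm_monoid "group_alg G :: ('a \<Rightarrow> 'k) ring"
    by (rule comm_monoid_group_alg) unfold_locales
  let ?P = "\<lambda>(i::nat) (j::nat). galg_mult G (U [^]\<^bsub>group_alg G\<^esub> i) (V [^]\<^bsub>group_alg G\<^esub> j)"
  have UV: "U \<in> carrier (group_alg G)" "V \<in> carrier (group_alg G)"
    using U V by (simp_all add: group_alg_simps)
  have times_U: "galg_mult G (?P i j) U = ?P (Suc i) j" for i j
    using UV by (simp add: group_alg_simps[symmetric] R.m_ac)
  have times_V: "galg_mult G (?P i j) V = ?P i (Suc j)" for i j
    using UV by (simp add: group_alg_simps[symmetric] R.m_ac)
  have "(\<lambda>x. U x + V x) [^]\<^bsub>group_alg G\<^esub> Suc n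
      = (\<lambda>x. \<Sum>k\<le>n. of_nat (n choose k) * (?P (Suc k) (n - k) x + ?P k (Suc (n - k)) x))"
    by (simp add: Suc.IH group_alg_simps galg_mult_sum_left galg_mult_scale_left
        galg_mult_add_right times_U times_V)
  also have "\<dots> = (\<lambda>x. \<Sum>k\<le>n. of_nat (n choose k) * (?P (Suc k) (n - k) x + ?P k (Suc n - k) x))"
    by (intro ext sum.cong refl) (simp add: Suc_diff_le)
  also have "\<dots> = (\<lambda>x. \<Sum>k\<le>Suc n. of_nat (Suc n choose k) * ?P k (Suc n - k) x)"
    by (rule ext) (rule sum_binomial_pascal)
  finally show ?case .
qed

lemma (in finite_comm_group) galg_add_pow_char:
  fixes U V :: "'a \<Rightarrow> 'k::field"
  assumes U: "U \<in> galg_carrier G" and V: "V \<in> galg_carrier G"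
    and prime: "Factorial_Ring.prime CHAR('k)"
  shows "(\<lambda>x. U x + V x) [^]\<^bsub>group_alg G\<^esub> CHAR('k)
     = (\<lambda>x. (U [^]\<^bsub>group_alg G\<^esub> CHAR('k)) x + (V [^]\<^bsub>group_alg G\<^esub> CHAR('k)) x)"
proof -
  let ?p = "CHAR('k)"
  let ?P = "\<lambda>(i::nat) (j::nat). galg_mult G (U [^]\<^bsub>group_alg G\<^esub> i) (V [^]\<^bsub>group_alg G\<^esub> j)"
  have middle_terms_vanish: "of_nat (?p choose k) = (0::'k)" if "0 < k" "k < ?p" for k
  proof -
    have "?p dvd (?p choose k)"
      using that prime by (intro dvd_choose_prime) auto
    then show ?thesis
      by (simp add: of_nat_eq_0_iff_char_dvd)
  qed
  have "(\<lambda>x. U x + V x) [^]\<^bsub>group_alg G\<^esub> ?p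
      = (\<lambda>x. \<Sum>k\<in>{0, ?p}. of_nat (?p choose k) * ?P k (?p - k) x)"
    unfolding galg_binomial[OF U V]
    by (intro ext sum.mono_neutral_right) (auto simp: middle_terms_vanish)
  also have "\<dots> = (\<lambda>x. ?P ?p 0 x + ?P 0 ?p x)"
    using prime by (simp add: add.commute prime_gt_0_nat)
  also have "\<dots> = (\<lambda>x. (U [^]\<^bsub>group_alg G\<^esub> ?p) x + (V [^]\<^bsub>group_alg G\<^esub> ?p) x)"
    by (simp add: group_alg_simps galg_mult_one galg_one_mult galg_pow_closed)
  finally show ?thesis .
qed

lemma (in finite_comm_group) galg_add_pow_char_power:
  fixes U V :: "'a \<Rightarrow> 'k::field"
  assumes U: "U \<in> galg_carrier G" and V: "V \<in> galg_carrier G"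
    and prime: "Factorial_Ring.prime CHAR('k)"
  shows "(\<lambda>x. U x + V x) [^]\<^bsub>group_alg G\<^esub> (CHAR('k) ^ t)
     = (\<lambda>x. (U [^]\<^bsub>group_alg G\<^esub> (CHAR('k) ^ t)) x + (V [^]\<^bsub>group_alg G\<^esub> (CHAR('k) ^ t)) x)"
proof (induction t)
  case 0
  have "(\<lambda>x. U x + V x) \<in> galg_carrier G"
    using U V by (simp add: galg_carrier_def)
  then show ?case
    using U V by (simp add: group_alg_simps galg_one_mult galg_one_closed)
next
  case (Suc t)
  interpret R: monoid "group_alg G :: ('a \<Rightarrow> 'k) ring"
    by (rule monoid_group_alg)
  have pow_Suc: "W [^]\<^bsub>group_alg G\<^esub> (CHAR('k) ^ Suc t)
      = (W [^]\<^bsub>group_alg G\<^esub> (CHAR('k) ^ t)) [^]\<^bsub>group_alg G\<^esub> CHAR('k)"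
    if "W \<in> galg_carrier G" for W :: "'a \<Rightarrow> 'k"
    using R.nat_pow_pow[of W] that by (simp add: group_alg_simps mult.commute)
  have "(\<lambda>x. U x + V x) \<in> galg_carrier G"
    using U V by (simp add: galg_carrier_def)
  then show ?case
    by (simp only: pow_Suc U V Suc.IH galg_add_pow_char[OF galg_pow_closed galg_pow_closed prime])
qed

lemma (in finite_comm_group) galg_sum_pow_char_power:
  fixes F :: "'i \<Rightarrow> 'a \<Rightarrow> 'k::field"
  assumes "finite S" and "\<And>i. i \<in> S \<Longrightarrow> F i \<in> galg_carrier G"
    and prime: "Factorial_Ring.prime CHAR('k)"
  shows "(\<lambda>x. \<Sum>i\<in>S. F i x) [^]\<^bsub>group_alg G\<^esub> (CHAR('k) ^ t)
     = (\<lambda>x. \<Sum>i\<in>S. (F i [^]\<^bsub>group_alg G\<^esub> (CHAR('k) ^ t)) x)"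
  using assms(1,2)
proof (induction S rule: finite_induct)
  case empty
  \<comment> \<open>The exponent must be positive: the zeroth power of \<open>0\<close> is the unit.\<close>
  have "CHAR('k) ^ t \<noteq> 0"
    using prime by (simp add: prime_gt_0_nat)
  then obtain m where "CHAR('k) ^ t = Suc m"
    using not0_implies_Suc by blast
  then show ?case
    by (simp add: group_alg_simps galg_mult_def fun_eq_iff)
next
  case (insert i S)
  have IH: "(\<lambda>x. \<Sum>j\<in>S. F j x) [^]\<^bsub>group_alg G\<^esub> (CHAR('k) ^ t)
      = (\<lambda>x. \<Sum>j\<in>S. (F j [^]\<^bsub>group_alg G\<^esub> (CHAR('k) ^ t)) x)"
    using insert.IH insert.prems by blast
  have "(\<lambda>x. \<Sum>j\<in>S. F j x) \<in> galg_carrier G"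
    using insert.prems by (auto simp: galg_carrier_def)
  from galg_add_pow_char_power[OF _ this prime, of "F i" t]
  show ?case
    using insert.hyps insert.prems IH by simp
qed

lemma (in finite_comm_group) galg_pow_char_power:
  fixes F :: "'a \<Rightarrow> 'k::field" and t :: nat
  assumes F: "F \<in> galg_carrier G" and prime: "Factorial_Ring.prime CHAR('k)"
  defines "q \<equiv> CHAR('k) ^ t"
  shows "F [^]\<^bsub>group_alg G\<^esub> q = (\<lambda>y. (\<Sum>x\<in>{x \<in> carrier G. x [^] q = y}. F x) ^ q)"
proof -
  have singles: "F = (\<lambda>y. \<Sum>x\<in>carrier G. (\<lambda>y. if y = x then F x else 0) y)"
    using F finite_carrier by (auto simp: galg_carrier_def fun_eq_iff)
  have "F [^]\<^bsub>group_alg G\<^esub> q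
      = (\<lambda>y. \<Sum>x\<in>carrier G. ((\<lambda>y. if y = x then F x else 0) [^]\<^bsub>group_alg G\<^esub> q) y)"
    unfolding q_def
    by (subst singles, rule galg_sum_pow_char_power[OF finite_carrier _ prime]) (auto simp: galg_carrier_def)
  also have "\<dots> = (\<lambda>y. \<Sum>x\<in>carrier G. if x [^] q = y then F x ^ q else 0)"
    by (intro ext sum.cong refl) (auto simp: galg_single_pow)
  also have "\<dots> = (\<lambda>y. \<Sum>x\<in>{x \<in> carrier G. x [^] q = y}. F x ^ q)"
    using finite_carrier by (simp add: sum.inter_filter)
  also have "\<dots> = (\<lambda>y. (\<Sum>x\<in>{x \<in> carrier G. x [^] q = y}. F x) ^ q)"
    unfolding q_def by (intro ext freshmans_dream_sum'[OF prime refl, symmetric])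
  finally show ?thesis .
qed

lemma (in finite_comm_group) galg_pow_char_power_eq_0_iff:
  fixes F :: "'a \<Rightarrow> 'k::field" and t :: nat
  assumes "F \<in> galg_carrier G" and "Factorial_Ring.prime CHAR('k)"
  defines "q \<equiv> CHAR('k) ^ t"
  shows "F [^]\<^bsub>group_alg G\<^esub> q = (\<lambda>y. 0)
     \<longleftrightarrow> (\<forall>y. (\<Sum>x\<in>{x \<in> carrier G. x [^] q = y}. F x) = 0)"
  using assms by (simp add: galg_pow_char_power fun_eq_iff prime_gt_0_nat)

section \<open>Relative augmentation ideals\<close>

lemma rel_aug_ideal_sumI:
  assumes "finite S"
    and "\<And>i. i \<in> S \<Longrightarrow> a i \<in> aug_ideal G N \<and> b i \<in> galg_carrier G"
  shows "(\<lambda>x. \<Sum>i\<in>S. galg_mult G (a i) (b i) x) \<in> rel_aug_ideal G N"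
proof -
  obtain e where e: "bij_betw e {..<card S} S"
    using ex_bij_betw_nat_finite[OF assms(1)] atLeast0LessThan by auto
  then have "(\<lambda>x. \<Sum>i\<in>S. galg_mult G (a i) (b i) x)
      = (\<lambda>x. \<Sum>i<card S. galg_mult G (a (e i)) (b (e i)) x)"
    by (intro ext sum.reindex_bij_betw[OF e, symmetric])
  moreover have "\<forall>i<card S. a (e i) \<in> aug_ideal G N \<and> b (e i) \<in> galg_carrier G"
    using e assms(2) by (auto simp: bij_betw_def)
  ultimately show ?thesis
    unfolding rel_aug_ideal_def mem_Collect_eq
    by (intro exI[of _ "card S"] exI[of _ "\<lambda>i. a (e i)"] exI[of _ "\<lambda>i. b (e i)"]) simp
qed

lemma rel_aug_ideal_subset: "rel_aug_ideal G N \<subseteq> galg_carrier G"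
  by (auto simp: rel_aug_ideal_def galg_carrier_def galg_mult_def)

lemma (in finite_group) aug_ideal_mult_coset_sum:
  assumes N: "subgroup N G" and a: "a \<in> aug_ideal G N" and g: "g \<in> carrier G"
  shows "(\<Sum>x\<in>N #> g. galg_mult G a b x) = 0"
proof -
  have NG: "N \<subseteq> carrier G"
    using N by (rule subgroup.subset)
  have coset: "N #> g \<subseteq> carrier G"
    using r_coset_subset_G[OF NG g] .
  have translate: "(\<Sum>x\<in>N #> g. b (inv y \<otimes> x)) = (\<Sum>x\<in>N #> g. b x)" if "y \<in> N" for y
    using sum_lcos[OF coset, of "inv y" b] lcos_rcos_subgroup[OF N _ g, of "inv y"] that N
    by (simp add: subgroup.m_inv_closed subgroup.mem_carrier)
  have "(\<Sum>x\<in>N #> g. galg_mult G a b x) = (\<Sum>y\<in>carrier G. a y * (\<Sum>x\<in>N #> g. b (inv y \<otimes> x)))"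
    using coset by (simp add: galg_mult_def subset_iff sum_distrib_left sum.swap[of _ "N #> g"] cong: sum.cong)
  also have "\<dots> = (\<Sum>y\<in>N. a y * (\<Sum>x\<in>N #> g. b (inv y \<otimes> x)))"
    using a NG finite_carrier by (intro sum.mono_neutral_right) (auto simp: aug_ideal_def)
  also have "\<dots> = (\<Sum>y\<in>N. a y) * (\<Sum>x\<in>N #> g. b x)"
    by (simp add: translate sum_distrib_right)
  also have "\<dots> = 0"
    using a by (simp add: aug_ideal_def)
  finally show ?thesis .
qed

lemma (in finite_group) rel_aug_ideal_coset_sum:
  fixes f :: "'a \<Rightarrow> 'k::field"
  assumes N: "subgroup N G" and f: "f \<in> rel_aug_ideal G N" and g: "g \<in> carrier G"
  shows "(\<Sum>x\<in>N #> g. f x) = 0"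
proof -
  obtain n and a b :: "nat \<Rightarrow> 'a \<Rightarrow> 'k" where ab: "\<forall>i<n. a i \<in> aug_ideal G N \<and> b i \<in> galg_carrier G"
    and f_eq: "f = (\<lambda>x. \<Sum>i<n. galg_mult G (a i) (b i) x)"
    using f unfolding rel_aug_ideal_def by blast
  have "(\<Sum>x\<in>N #> g. f x) = (\<Sum>i<n. \<Sum>x\<in>N #> g. galg_mult G (a i) (b i) x)"
    unfolding f_eq by (rule sum.swap)
  also have "\<dots> = 0"
    using ab by (auto intro!: sum.neutral aug_ideal_mult_coset_sum[OF N _ g])
  finally show ?thesis .
qed

lemma (in group) coset_translate_aug_ideal:
  assumes N: "subgroup N G" and t: "t \<in> carrier G" and "(\<Sum>x\<in>N #> t. f x) = 0"
  shows "(\<lambda>h. if h \<in> N then f (h \<otimes> t) else 0) \<in> aug_ideal G N"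
  using assms sum_rcos[OF subgroup.subset[OF N] t, of f] by (simp add: aug_ideal_def)

lemma (in finite_group) galg_mult_coset_translate:
  assumes N: "subgroup N G" and t: "t \<in> carrier G"
  shows "galg_mult G (\<lambda>h. if h \<in> N then f (h \<otimes> t) else 0) (\<lambda>x. if x = t then 1 else 0)
       = (\<lambda>x. if x \<in> N #> t then f x else 0)"
  using subgroup.rcos_module[OF N is_group t] r_coset_subset_G[OF subgroup.subset[OF N] t] t
  by (auto simp: galg_mult_single_right m_assoc fun_eq_iff)

lemma (in finite_group) rel_aug_idealI:
  assumes N: "subgroup N G" and f: "f \<in> galg_carrier G"
    and coset_sums: "\<And>g. g \<in> carrier G \<Longrightarrow> (\<Sum>x\<in>N #> g. f x) = 0"
  shows "f \<in> rel_aug_ideal G N"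
proof -
  define t where "t C = (SOME t. t \<in> C)" for C :: "'a set"
  have t_carrier: "t C \<in> carrier G" and C_eq: "C = N #> t C" if "C \<in> rcosets N" for C
    using rcosets_some_repr[OF N that] by (simp_all add: t_def)
  \<comment> \<open>The restriction of \<open>f\<close> to a coset \<open>N t\<close> is \<open>a t\<close> with \<open>a = (h \<mapsto> f (h t)) \<in> I(N)\<close>.\<close>
  define a where "a C = (\<lambda>h. if h \<in> N then f (h \<otimes> t C) else 0)" for C
  have "(\<lambda>x. \<Sum>C\<in>rcosets N. galg_mult G (a C) (\<lambda>x. if x = t C then 1 else 0) x) \<in> rel_aug_ideal G N"
    using coset_sums t_carrier C_eq
    by (intro rel_aug_ideal_sumI finite_rcosets[OF N])
       (auto simp: a_def galg_carrier_def intro!: coset_translate_aug_ideal[OF N])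
  moreover have "(\<lambda>x. \<Sum>C\<in>rcosets N. galg_mult G (a C) (\<lambda>x. if x = t C then 1 else 0) x) = f"
  proof
    fix x
    have "(\<Sum>C\<in>rcosets N. galg_mult G (a C) (\<lambda>x. if x = t C then 1 else 0) x)
        = (\<Sum>C\<in>rcosets N. if x \<in> C then f x else 0)"
    proof (intro sum.cong refl)
      fix C assume C: "C \<in> rcosets N"
      show "galg_mult G (a C) (\<lambda>x. if x = t C then 1 else 0) x = (if x \<in> C then f x else 0)"
        using galg_mult_coset_translate[OF N t_carrier[OF C], of f] C_eq[OF C] by (simp add: a_def)
    qed
    also have "\<dots> = f x"
    proof (cases "x \<in> carrier G")
      case True
      then show ?thesis
        using finite_rcosets[OF N] rcosets_mem_iff[OF N _ True]
        by (simp add: rcosetsI[OF subgroup.subset[OF N]] cong: sum.cong)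
    next
      case False
      then show ?thesis
        using f rcosets_part_G[OF N] by (auto simp: galg_carrier_def intro: sum.neutral)
    qed
    finally show "(\<Sum>C\<in>rcosets N. galg_mult G (a C) (\<lambda>x. if x = t C then 1 else 0) x) = f x" .
  qed
  ultimately show ?thesis
    by simp
qed

lemma (in finite_group) rel_aug_ideal_eq:
  assumes "subgroup N G"
  shows "rel_aug_ideal G N = {f \<in> galg_carrier G. \<forall>g\<in>carrier G. (\<Sum>x\<in>N #> g. f x) = 0}"
  using rel_aug_ideal_subset rel_aug_ideal_coset_sum[OF assms] rel_aug_idealI[OF assms] by blast

section \<open>Projection onto the group algebra of a quotient\<close>

definition galg_proj :: "('g, 'b) monoid_scheme \<Rightarrow> 'g set \<Rightarrow> ('g \<Rightarrow> 'k::field) \<Rightarrow> 'g set \<Rightarrow> 'k"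
  where "galg_proj G N f = (\<lambda>C. if C \<in> carrier (G Mod N) then \<Sum>x\<in>C. f x else 0)"

lemma galg_proj_closed: "galg_proj G N f \<in> galg_carrier (G Mod N)"
  by (simp add: galg_proj_def galg_carrier_def)

lemma (in group) galg_proj_eq_0_iff:
  "galg_proj G N f = (\<lambda>C. 0) \<longleftrightarrow> (\<forall>g\<in>carrier G. (\<Sum>x\<in>N #> g. f x) = 0)"
  by (auto simp: galg_proj_def fun_eq_iff FactGroup_def RCOSETS_def)

lemma (in finite_group) rel_aug_ideal_iff_galg_proj:
  assumes "subgroup N G" "f \<in> galg_carrier G"
  shows "f \<in> rel_aug_ideal G N \<longleftrightarrow> galg_proj G N f = (\<lambda>C. 0)"
  using assms by (simp add: rel_aug_ideal_eq galg_proj_eq_0_iff)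

lemma (in finite_group) galg_proj_mult:
  assumes N: "N \<lhd> G"
  shows "galg_proj G N (galg_mult G f h) = galg_mult (G Mod N) (galg_proj G N f) (galg_proj G N h)"
proof
  interpret N: normal N G by (rule N)
  fix C
  show "galg_proj G N (galg_mult G f h) C = galg_mult (G Mod N) (galg_proj G N f) (galg_proj G N h) C"
  proof (cases "C \<in> carrier (G Mod N)")
    case False
    then show ?thesis by (simp add: galg_proj_def galg_mult_def)
  next
    case True
    then obtain g where g: "g \<in> carrier G" and C: "C = N #> g"
      by (auto simp: FactGroup_def RCOSETS_def)
    have C_carrier: "C \<subseteq> carrier G"
      using C r_coset_subset_G[OF N.subset g] by simp
    have translate: "(\<Sum>x\<in>C. h (inv y \<otimes> x)) = galg_proj G N h (inv\<^bsub>G Mod N\<^esub> (N #> y) \<otimes>\<^bsub>G Mod N\<^esub> C)"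
      if y: "y \<in> carrier G" for y
      using sum_lcos[OF C_carrier, of "inv y" h] N.lcos_rcos[of "inv y" g] N.FactGroup_inv_mult[OF y g] y g C
      by (simp add: galg_proj_def carrier_FactGroup)
    have "galg_proj G N (galg_mult G f h) C = (\<Sum>x\<in>C. \<Sum>y\<in>carrier G. f y * h (inv y \<otimes> x))"
      using True C_carrier by (auto simp: galg_proj_def galg_mult_def intro!: sum.cong)
    also have "\<dots> = (\<Sum>y\<in>carrier G. f y * galg_proj G N h (inv\<^bsub>G Mod N\<^esub> (N #> y) \<otimes>\<^bsub>G Mod N\<^esub> C))"
      by (subst sum.swap) (simp add: sum_distrib_left[symmetric] translate)
    also have "\<dots> = (\<Sum>D\<in>rcosets N. \<Sum>y\<in>D. f y * galg_proj G N h (inv\<^bsub>G Mod N\<^esub> D \<otimes>\<^bsub>G Mod N\<^esub> C))"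
      unfolding sum_rcosets[OF N.subgroup_axioms]
      by (intro sum.cong refl) (metis rcosets_mem_iff[OF N.subgroup_axioms] rcosets_part_G[OF N.subgroup_axioms] Union_iff)
    also have "\<dots> = galg_mult (G Mod N) (galg_proj G N f) (galg_proj G N h) C"
      using True by (simp add: galg_mult_def galg_proj_def FactGroup_def sum_distrib_right cong: if_cong)
    finally show ?thesis .
  qed
qed

lemma (in finite_group) galg_proj_one:
  assumes N: "N \<lhd> G"
  shows "galg_proj G N (\<lambda>x. if x = \<one> then 1 else 0)
       = (\<lambda>C. if C = \<one>\<^bsub>G Mod N\<^esub> then (1::'k::field) else 0)"
proof
  interpret N: normal N G by (rule N)
  fix C
  have N_carrier: "N \<in> carrier (G Mod N)"
    using N.subgroup_in_rcosets[OF is_group] by (simp add: FactGroup_def)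
  have sum_one: "(\<Sum>x\<in>D. if x = \<one> then 1 else 0) = (if D = N then 1 else (0::'k))"
    if D: "D \<in> carrier (G Mod N)" for D
  proof -
    have "finite D"
      using D rcosets_part_G[OF N.subgroup_axioms] finite_carrier
      by (metis FactGroup_def Sup_upper finite_subset partial_object.select_convs(1))
    moreover have "\<one> \<in> D \<longleftrightarrow> D = N"
      using rcosets_mem_iff[OF N.subgroup_axioms, of D \<one>] D N.subset by (simp add: FactGroup_def)
    ultimately show ?thesis
      by simp
  qed
  show "galg_proj G N (\<lambda>x. if x = \<one> then 1 else 0) C
      = (if C = \<one>\<^bsub>G Mod N\<^esub> then (1::'k) else 0)"
    using N_carrier by (simp add: galg_proj_def sum_one)
qed

lemma (in finite_group) galg_proj_pow:
  assumes "N \<lhd> G"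
  shows "galg_proj G N (f [^]\<^bsub>group_alg G\<^esub> (n::nat)) = galg_proj G N f [^]\<^bsub>group_alg (G Mod N)\<^esub> n"
  by (induction n) (simp_all add: group_alg_simps galg_proj_one[OF assms] galg_proj_mult[OF assms])

lemma (in finite_group) sum_galg_proj:
  assumes "subgroup N G"
  shows "(\<Sum>C\<in>{C \<in> carrier (G Mod N). P C}. galg_proj G N f C) = (\<Sum>x\<in>{x \<in> carrier G. P (N #> x)}. f x)"
proof -
  have "(\<Sum>x\<in>{x \<in> carrier G. P (N #> x)}. f x) = (\<Sum>x\<in>carrier G. if P (N #> x) then f x else 0)"
    using finite_carrier by (simp add: sum.inter_filter)
  also have "\<dots> = (\<Sum>C\<in>rcosets N. \<Sum>x\<in>C. if P (N #> x) then f x else 0)"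
    by (rule sum_rcosets[OF assms])
  also have "\<dots> = (\<Sum>C\<in>rcosets N. if P C then \<Sum>x\<in>C. f x else 0)"
  proof (intro sum.cong refl)
    fix C assume C: "C \<in> rcosets N"
    have "N #> x = C" if "x \<in> C" for x
      using that C rcosets_mem_iff[OF assms C] rcosets_part_G[OF assms] by blast
    then show "(\<Sum>x\<in>C. if P (N #> x) then f x else 0) = (if P C then \<Sum>x\<in>C. f x else 0)"
      by (simp cong: sum.cong)
  qed
  also have "\<dots> = (\<Sum>C\<in>{C \<in> carrier (G Mod N). P C}. galg_proj G N f C)"
    using finite_rcosets[OF assms] by (simp add: sum.inter_filter galg_proj_def FactGroup_def)
  finally show ?thesis
    by (rule sym)
qed

section \<open>The ideal \<open>I(\<Omega>\<^sub>t(G:N))kG\<close>\<close>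

lemma sum_fibers_eq_0_iff:
  "(\<forall>y. (\<Sum>x\<in>{x \<in> A. h x = y}. f x) = 0) \<longleftrightarrow> (\<forall>a\<in>A. (\<Sum>x\<in>{x \<in> A. h x = h a}. f x) = 0)"
proof
  assume fibers: "\<forall>a\<in>A. (\<Sum>x\<in>{x \<in> A. h x = h a}. f x) = 0"
  show "\<forall>y. (\<Sum>x\<in>{x \<in> A. h x = y}. f x) = 0"
  proof
    fix y
    show "(\<Sum>x\<in>{x \<in> A. h x = y}. f x) = 0"
    proof (cases "\<exists>a\<in>A. h a = y")
      case True
      then show ?thesis
        using fibers by auto
    next
      case False
      then have "{x \<in> A. h x = y} = {}"
        by auto
      then show ?thesis
        by (simp only: sum.empty)
    qed
  qed
qed blast

lemma (in finite_group) pow_char_power_mem_rel_aug_ideal_iff: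
  fixes f :: "'a \<Rightarrow> 'k::field" and t :: nat
  assumes N: "N \<lhd> G" and comm: "comm_group (G Mod N)"
    and prime: "Factorial_Ring.prime CHAR('k)" and f: "f \<in> galg_carrier G"
  defines "q \<equiv> CHAR('k) ^ t"
  shows "f [^]\<^bsub>group_alg G\<^esub> q \<in> rel_aug_ideal G N
     \<longleftrightarrow> f \<in> rel_aug_ideal G {g \<in> carrier G. g [^] q \<in> N}"
proof -
  interpret N: normal N G by fact
  interpret Q: finite_comm_group "G Mod N"
    by (rule finite_comm_group_Mod[OF N comm])
  let ?\<rho> = "\<lambda>g. (N #> g) [^]\<^bsub>G Mod N\<^esub> q"
  interpret \<rho>: group_hom G "G Mod N" ?\<rho>
    by unfold_locales (rule N.pow_rcos_hom[OF comm])
  have "f [^]\<^bsub>group_alg G\<^esub> q \<in> rel_aug_ideal G N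
      \<longleftrightarrow> galg_proj G N f [^]\<^bsub>group_alg (G Mod N)\<^esub> q = (\<lambda>C. 0)"
    by (simp add: rel_aug_ideal_iff_galg_proj[OF N.subgroup_axioms galg_pow_closed] galg_proj_pow[OF N])
  also have "\<dots> \<longleftrightarrow> (\<forall>D. (\<Sum>C\<in>{C \<in> carrier (G Mod N). C [^]\<^bsub>G Mod N\<^esub> q = D}. galg_proj G N f C) = 0)"
    unfolding q_def by (rule Q.galg_pow_char_power_eq_0_iff[OF galg_proj_closed prime])
  also have "\<dots> \<longleftrightarrow> (\<forall>D. (\<Sum>x\<in>{x \<in> carrier G. ?\<rho> x = D}. f x) = 0)"
    by (simp add: sum_galg_proj[OF N.subgroup_axioms])
  also have "\<dots> \<longleftrightarrow> (\<forall>g\<in>carrier G. (\<Sum>x\<in>kernel G (G Mod N) ?\<rho> #> g. f x) = 0)"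
    by (simp add: sum_fibers_eq_0_iff \<rho>.kernel_rcos_eq)
  also have "\<dots> \<longleftrightarrow> f \<in> rel_aug_ideal G {g \<in> carrier G. g [^] q \<in> N}"
    using f by (simp add: rel_aug_ideal_eq[OF N.subgroup_pow_mem[OF comm]] N.kernel_pow_rcos)
  finally show ?thesis .
qed

lemma (in finite_group) rel_aug_ideal_Omega_rel:
  fixes t :: nat
  assumes N: "subgroup N G" "derived G (carrier G) \<subseteq> N" and prime: "Factorial_Ring.prime CHAR('k)"
  shows "(rel_aug_ideal G (Omega_rel G CHAR('k) t N) :: ('a \<Rightarrow> 'k::field) set)
       = {f \<in> carrier (group_alg G). f [^]\<^bsub>group_alg G\<^esub> (CHAR('k) ^ t) \<in> rel_aug_ideal G N}"
proof -
  have normal: "N \<lhd> G" and comm: "comm_group (G Mod N)"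
    using normal_if_derived_subset[OF N] comm_group_Mod_if_derived_subset[OF N] .
  have "Omega_rel G CHAR('k) t N = {g \<in> carrier G. g [^] (CHAR('k) ^ t) \<in> N}"
    using Omega_rel_eq normal.subgroup_pow_mem[OF normal comm] by blast
  moreover have "f \<in> rel_aug_ideal G {g \<in> carrier G. g [^] (CHAR('k) ^ t) \<in> N}
      \<longleftrightarrow> f \<in> galg_carrier G \<and> f [^]\<^bsub>group_alg G\<^esub> (CHAR('k) ^ t) \<in> rel_aug_ideal G N"
    for f :: "'a \<Rightarrow> 'k"
    using rel_aug_ideal_subset pow_char_power_mem_rel_aug_ideal_iff[OF normal comm prime, of f t] by blast
  ultimately show ?thesis
    by (auto simp: group_alg_simps)
qed

lemma ring_hom_nat_pow:
  assumes "h \<in> ring_hom R S" "monoid R" "x \<in> carrier R"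
  shows "h (x [^]\<^bsub>R\<^esub> (n::nat)) = h x [^]\<^bsub>S\<^esub> n"
  using assms by (induction n) (simp_all add: ring_hom_def monoid.nat_pow_closed)

lemma ring_iso_image_pow_preimage:
  assumes iso: "\<phi> \<in> ring_iso R S" and R: "monoid R"
    and I: "I \<subseteq> carrier R" and J: "\<phi> ` I = J"
  shows "\<phi> ` {x \<in> carrier R. x [^]\<^bsub>R\<^esub> (n::nat) \<in> I} = {y \<in> carrier S. y [^]\<^bsub>S\<^esub> n \<in> J}"
proof -
  have hom: "\<phi> \<in> ring_hom R S" and bij: "bij_betw \<phi> (carrier R) (carrier S)"
    using iso by (auto simp: ring_iso_def)
  have "\<phi> x [^]\<^bsub>S\<^esub> n \<in> J \<longleftrightarrow> x [^]\<^bsub>R\<^esub> n \<in> I" if x: "x \<in> carrier R" for x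
  proof -
    have "\<phi> x [^]\<^bsub>S\<^esub> n = \<phi> (x [^]\<^bsub>R\<^esub> n)"
      using ring_hom_nat_pow[OF hom R x] by simp
    moreover have "x [^]\<^bsub>R\<^esub> n \<in> carrier R"
      using monoid.nat_pow_closed[OF R x] .
    ultimately show ?thesis
      using J I bij by (auto simp: bij_betw_def dest: inj_onD)
  qed
  note pow_iff = this
  show ?thesis
  proof (intro equalityI subsetI)
    fix y assume "y \<in> \<phi> ` {x \<in> carrier R. x [^]\<^bsub>R\<^esub> n \<in> I}"
    then show "y \<in> {y \<in> carrier S. y [^]\<^bsub>S\<^esub> n \<in> J}"
      using bij pow_iff by (auto simp: bij_betw_def)
  next
    fix y assume y: "y \<in> {y \<in> carrier S. y [^]\<^bsub>S\<^esub> n \<in> J}"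
    then obtain x where "x \<in> carrier R" "y = \<phi> x"
      using bij by (auto simp: bij_betw_def)
    then show "y \<in> \<phi> ` {x \<in> carrier R. x [^]\<^bsub>R\<^esub> n \<in> I}"
      using y pow_iff by auto
  qed
qed

theorem lemma2p6:
  fixes p :: nat
    and G :: "'g monoid" and H :: "'h monoid"
    and NG :: "'g set" and NH :: "'h set"
    and \<phi> :: "('g \<Rightarrow> 'k::field) \<Rightarrow> ('h \<Rightarrow> 'k)"
  assumes "Factorial_Ring.prime p"
    and "p_group p G" and "p_group p H"
    and "subgroup NG G" and "derived G (carrier G) \<subseteq> NG"
    and "subgroup NH H" and "derived H (carrier H) \<subseteq> NH"
    and "CHAR('k) = p"
    and "\<phi> \<in> ring_iso (group_alg G) (group_alg H)"
    and "\<phi> ` rel_aug_ideal G NG = rel_aug_ideal H NH"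
    and "t > 0"
  shows "\<phi> ` rel_aug_ideal G (Omega_rel G p t NG) = rel_aug_ideal H (Omega_rel H p t NH)"
proof -
  have prime: "Factorial_Ring.prime CHAR('k)"
    using assms(1,8) by simp
  interpret G: finite_group G
    using assms(2) by (simp add: p_group_def finite_group_def finite_group_axioms_def)
  interpret H: finite_group H
    using assms(3) by (simp add: p_group_def finite_group_def finite_group_axioms_def)
  have "rel_aug_ideal G NG \<subseteq> carrier (group_alg G)"
    using rel_aug_ideal_subset by (simp add: group_alg_simps)
  from ring_iso_image_pow_preimage[OF assms(9) G.monoid_group_alg this assms(10)]
  show ?thesis
    using G.rel_aug_ideal_Omega_rel[OF assms(4,5) prime] H.rel_aug_ideal_Omega_rel[OF assms(6,7) prime]
      assms(8)
    by (simp add: group_alg_simps)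
qed

end
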